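(* For $n\ge 1$, let $S_n$ denote the bitsum (number of $1$s) of a persolus bitstring of length $n$ chosen uniformly at random among all persolus bitstrings of length $n$. Then \[ \lim_{n\to\infty}\frac{\mathbb{E}(S_n)}{n}=\frac{1}{3}\left[1-\left(\frac{31+3\sqrt{93}}{1922}\right)^{1/3}-\left(\frac{31-3\sqrt{93}}{1922}\right)^{1/3}\right]=0.1942540040\ldots, \] \[ \lim_{n\to\infty}\frac{\mathbb{V}(S_n)}{n}=\frac{1}{2883}\left(\frac{93}{2}\right)^{1/3}\left[\left(8649+457\sqrt{93}\right)^{1/3}+\left(8649-457\sqrt{93}\right)^{1/3}\right]=0.0495615175\ldots \]
   Context: A finite bitstring (a finite word over $\{0,1\}$) is called persolus if every $1$ in it is isolated (no two $1$s are adjacent) and each of its $0$s has at least one neighboring (adjacent) $0$. For every $n\ge1$ there is at least one persolus bitstring of length $n$. $\mathbb{E}$ and $\mathbb{V}$ denote expectation and variance with respect to the uniform distribution on persolus bitstrings of length $n$. *)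

theory Defs
  imports "HOL-Analysis.Analysis"
begin

text \<open>Bitstrings are lists of booleans; True represents the bit 1, False the bit 0.\<close>

definition persolus :: "bool list \<Rightarrow> bool" where
  "persolus w \<longleftrightarrow>
     (\<forall>i. Suc i < length w \<longrightarrow> \<not> (w ! i \<and> w ! Suc i)) \<and>
     (\<forall>i < length w. \<not> w ! i \<longrightarrow>
        ((i > 0 \<and> \<not> w ! (i - 1)) \<or> (Suc i < length w \<and> \<not> w ! Suc i)))"

definition persolus_strings :: "nat \<Rightarrow> bool list set" where
  "persolus_strings n = {w. length w = n \<and> persolus w}"

definition bitsum :: "bool list \<Rightarrow> nat" where
  "bitsum w = length (filter id w)"

definition ES :: "nat \<Rightarrow> real" where
  "ES n = (\<Sum>w\<in>persolus_strings n. real (bitsum w)) / real (card (persolus_strings n))"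

definition VS :: "nat \<Rightarrow> real" where
  "VS n = (\<Sum>w\<in>persolus_strings n. (real (bitsum w) - ES n)\<^sup>2) / real (card (persolus_strings n))"

end

theory Submission
  imports Defs "HOL-Real_Asymp.Real_Asymp"
begin

text \<open>Let \<open>\<alpha> \<approx> 1.4656\<close> be the real root of \<open>X\<^sup>3 = X\<^sup>2 + 1\<close> (the supergolden ratio).
  A factor \<open>00\<close> decouples the persolus conditions on its two sides, so the words \<open>w\<close> with
  \<open>00w\<close> persolus start with \<open>0\<close> or with \<open>100\<close>, and persolus words of length \<open>n + 3\<close> are
  \<open>00w\<close> or \<open>100w\<close> for such \<open>w\<close>. Hence the power sums \<open>\<Sum> bitsum\<^sup>j\<close> (\<open>j \<le> 2\<close>) over persolus
  words satisfy Narayana's recurrence \<open>x (n + 3) = x (n + 2) + x n\<close>, with the lower power sums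
  as forcing terms. The two other roots of \<open>X\<^sup>3 - X\<^sup>2 - 1\<close> lie inside the unit disc, so these
  sums are \<open>\<alpha>\<^sup>n\<close> times a polynomial of degree \<open>j\<close> in \<open>n\<close> up to a bounded error. Mean and
  variance then grow like \<open>n / (\<alpha>\<^sup>2 + 3)\<close> and \<open>n (2\<alpha>\<^sup>2 + \<alpha> + 1) / (\<alpha>\<^sup>2 + 3)\<^sup>3\<close>, and Cardano's
  formula turns these constants into the stated radicals.\<close>

section \<open>Persolus words\<close>

lemma nth_append_00:
  "i < length u + 2 \<Longrightarrow> (u @ [False, False]) ! i = (u @ False # False # v) ! i"
  "(False # False # v) ! i = (u @ False # False # v) ! (length u + i)"
  by (auto simp: nth_append nth_Cons split: nat.splits)

lemma persolus_append_00D: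
  assumes "persolus (u @ False # False # v)"
  shows "persolus (u @ [False, False])" and "persolus (False # False # v)"
proof -
  define w l r where "w = u @ False # False # v" and "l = u @ [False, False]" and "r = False # False # v"
  define k where "k = length u"
  have len: "length w = k + length r" "length l = k + 2" "length r = length v + 2"
    unfolding w_def l_def r_def k_def by simp_all
  have l: "i < k + 2 \<Longrightarrow> l ! i = w ! i" and r: "r ! i = w ! (k + i)" for i
    unfolding w_def l_def r_def k_def by (simp_all add: nth_append_00)
  have r01: "\<not> r ! 0" "\<not> r ! 1" unfolding r_def by simp_all
  have ones: "\<And>i. Suc i < length w \<Longrightarrow> \<not> (w ! i \<and> w ! Suc i)"
    and zeros: "\<And>i. i < length w \<Longrightarrow> \<not> w ! i \<Longrightarrow> (i > 0 \<and> \<not> w ! (i - 1)) \<or> (Suc i < length w \<and> \<not> w ! Suc i)"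
    using assms unfolding persolus_def w_def by blast+
  have "persolus l" unfolding persolus_def
  proof (intro conjI allI impI)
    fix i assume "Suc i < length l" then show "\<not> (l ! i \<and> l ! Suc i)" using ones[of i] l[of i] l[of "Suc i"] len by auto
  next
    fix i assume i: "i < length l" "\<not> l ! i"
    show "(i > 0 \<and> \<not> l ! (i - 1)) \<or> (Suc i < length l \<and> \<not> l ! Suc i)"
    proof (cases "i = Suc k")
      case True then show ?thesis using l[of k] r[of 0] r01 len by simp
    next
      case False then show ?thesis using zeros[of i] i l[of i] l[of "i - 1"] l[of "Suc i"] len by auto
    qed
  qed
  moreover have "persolus r" unfolding persolus_def
  proof (intro conjI allI impI)
    fix i assume "Suc i < length r" then show "\<not> (r ! i \<and> r ! Suc i)" using ones[of "k + i"] r[of i] r[of "Suc i"] len by auto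
  next
    fix i assume i: "i < length r" "\<not> r ! i"
    show "(i > 0 \<and> \<not> r ! (i - 1)) \<or> (Suc i < length r \<and> \<not> r ! Suc i)"
    proof (cases i)
      case 0 then show ?thesis using r01 len by simp
    next
      case (Suc j) then show ?thesis using zeros[of "k + i"] i r[of i] r[of j] r[of "Suc i"] len by auto
    qed
  qed
  ultimately show "persolus (u @ [False, False])" "persolus (False # False # v)" unfolding l_def r_def by simp_all
qed

lemma persolus_append_00I:
  assumes "persolus (u @ [False, False])" and "persolus (False # False # v)"
  shows "persolus (u @ False # False # v)"
proof -
  define w l r where "w = u @ False # False # v" and "l = u @ [False, False]" and "r = False # False # v"
  define k where "k = length u"
  have len: "length w = k + length r" "length l = k + 2" "length r = length v + 2"
    unfolding w_def l_def r_def k_def by simp_all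
  have l: "i < k + 2 \<Longrightarrow> l ! i = w ! i" and r: "r ! i = w ! (k + i)" for i
    unfolding w_def l_def r_def k_def by (simp_all add: nth_append_00)
  have ones_l: "\<And>i. Suc i < length l \<Longrightarrow> \<not> (l ! i \<and> l ! Suc i)"
    and zeros_l: "\<And>i. i < length l \<Longrightarrow> \<not> l ! i \<Longrightarrow> (i > 0 \<and> \<not> l ! (i - 1)) \<or> (Suc i < length l \<and> \<not> l ! Suc i)"
    and ones_r: "\<And>i. Suc i < length r \<Longrightarrow> \<not> (r ! i \<and> r ! Suc i)"
    and zeros_r: "\<And>i. i < length r \<Longrightarrow> \<not> r ! i \<Longrightarrow> (i > 0 \<and> \<not> r ! (i - 1)) \<or> (Suc i < length r \<and> \<not> r ! Suc i)"
    using assms unfolding persolus_def l_def r_def by blast+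
  have "persolus w" unfolding persolus_def
  proof (intro conjI allI impI)
    fix i assume i: "Suc i < length w"
    show "\<not> (w ! i \<and> w ! Suc i)"
    proof (cases "i < k")
      case True then show ?thesis using ones_l[of i] l[of i] l[of "Suc i"] len by auto
    next
      case False
      then obtain j where "i = k + j" using le_Suc_ex not_less by blast
      then show ?thesis using ones_r[of j] i r[of j] r[of "Suc j"] len by auto
    qed
  next
    fix i assume i: "i < length w" "\<not> w ! i"
    show "(i > 0 \<and> \<not> w ! (i - 1)) \<or> (Suc i < length w \<and> \<not> w ! Suc i)"
    proof (cases "i \<le> k")
      case True then show ?thesis using zeros_l[of i] i l[of i] l[of "i - 1"] l[of "Suc i"] len by auto
    next
      case False
      then obtain j where "i = k + Suc j" by (metis add_Suc_right less_imp_Suc_add not_le)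
      then show ?thesis using zeros_r[of "Suc j"] i r[of "Suc j"] r[of j] r[of "Suc (Suc j)"] len by auto
    qed
  qed
  then show ?thesis unfolding w_def .
qed

text \<open>The persolus conditions only look at neighbouring letters, and both letters of a factor
  \<open>00\<close> satisfy them whatever surrounds it.\<close>
lemma persolus_append_00:
  "persolus (u @ False # False # v) \<longleftrightarrow> persolus (u @ [False, False]) \<and> persolus (False # False # v)"
  using persolus_append_00D persolus_append_00I by blast

lemma not_persolus_adjacent_ones: "Suc i < length w \<Longrightarrow> w ! i \<Longrightarrow> w ! Suc i \<Longrightarrow> \<not> persolus w"
  unfolding persolus_def by blast

lemma not_persolus_lonely_zero:
  "i < length w \<Longrightarrow> \<not> w ! i \<Longrightarrow> (0 < i \<longrightarrow> w ! (i - 1)) \<Longrightarrow> (Suc i < length w \<longrightarrow> w ! Suc i) \<Longrightarrow> \<not> persolus w"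
  unfolding persolus_def by blast

lemma persolus_short_words:
  "persolus [False, False, False]" "persolus [True, False, False]" "persolus [False, False, True, False, False]"
  unfolding persolus_def by (auto simp: less_Suc_eq nth_Cons' numeral_eq_Suc)

lemma persolus_reduce_00:
  "persolus (False # False # False # w) \<longleftrightarrow> persolus (False # False # w)"
  "persolus (True # False # False # w) \<longleftrightarrow> persolus (False # False # w)"
  "persolus (False # False # True # False # False # w) \<longleftrightarrow> persolus (False # False # w)"
  using persolus_append_00[of "[False]" w] persolus_append_00[of "[True]" w]
    persolus_append_00[of "[False, False, True]" w] persolus_short_words
  by simp_all

definition tails00 :: "nat \<Rightarrow> bool list set" where
  "tails00 n = {w. length w = n \<and> persolus (False # False # w)}"

lemma finite_tails00: "finite (tails00 n)"
  unfolding tails00_def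
  by (rule finite_subset[OF _ finite_lists_length_eq[of UNIV n]]) auto

lemma finite_persolus_strings: "finite (persolus_strings n)"
  unfolding persolus_strings_def
  by (rule finite_subset[OF _ finite_lists_length_eq[of UNIV n]]) auto

lemma replicate_in_tails00: "replicate n False \<in> tails00 n"
proof -
  have "persolus (False # False # replicate n False)"
  proof (induction n)
    case 0
    show ?case unfolding persolus_def by (auto simp: nth_Cons split: nat.splits)
  next
    case (Suc n)
    then show ?case using persolus_reduce_00(1) by simp
  qed
  then show ?thesis unfolding tails00_def by simp
qed

lemma length_Suc3_cases:
  assumes "length w = n + 3"
  obtains x y z v where "w = x # y # z # v" "length v = n"
  using assms by (metis Suc3_eq_add_3 add.commute length_Suc_conv)

lemma tails00_Suc3:
  "tails00 (n + 3) = Cons False ` tails00 (n + 2) \<union> (\<lambda>v. True # False # False # v) ` tails00 n"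
proof (intro set_eqI iffI)
  fix w assume "w \<in> tails00 (n + 3)"
  then have w: "length w = n + 3" "persolus (False # False # w)" unfolding tails00_def by auto
  obtain x y z v where xyzv: "w = x # y # z # v" "length v = n"
    using w(1) by (rule length_Suc3_cases)
  show "w \<in> Cons False ` tails00 (n + 2) \<union> (\<lambda>v. True # False # False # v) ` tails00 n"
  proof (cases x)
    case False
    then have "y # z # v \<in> tails00 (n + 2)"
      using w xyzv persolus_reduce_00(1) unfolding tails00_def by simp
    then show ?thesis using xyzv False by auto
  next
    case True
    have "\<not> y" using not_persolus_adjacent_ones[of 2] w xyzv True by auto
    moreover have "\<not> z" using not_persolus_lonely_zero[of 3] w xyzv True \<open>\<not> y\<close> by auto
    ultimately have "v \<in> tails00 n"
      using w xyzv True persolus_reduce_00(3) unfolding tails00_def by simp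
    then show ?thesis using xyzv True \<open>\<not> y\<close> \<open>\<not> z\<close> by auto
  qed
next
  fix w assume "w \<in> Cons False ` tails00 (n + 2) \<union> (\<lambda>v. True # False # False # v) ` tails00 n"
  then show "w \<in> tails00 (n + 3)"
    unfolding tails00_def by (auto simp: persolus_reduce_00)
qed

lemma persolus_strings_Suc3:
  "persolus_strings (n + 3) = (\<lambda>v. False # False # v) ` tails00 (n + 1) \<union> (\<lambda>v. True # False # False # v) ` tails00 n"
proof (intro set_eqI iffI)
  fix w assume "w \<in> persolus_strings (n + 3)"
  then have w: "length w = n + 3" "persolus w" unfolding persolus_strings_def by auto
  obtain x y z v where xyzv: "w = x # y # z # v" "length v = n"
    using w(1) by (rule length_Suc3_cases)
  show "w \<in> (\<lambda>v. False # False # v) ` tails00 (n + 1) \<union> (\<lambda>v. True # False # False # v) ` tails00 n"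
  proof (cases x)
    case False
    have "\<not> y" using not_persolus_lonely_zero[of 0] w xyzv False by auto
    then have "z # v \<in> tails00 (n + 1)" using w xyzv False unfolding tails00_def by simp
    then show ?thesis using xyzv False \<open>\<not> y\<close> by auto
  next
    case True
    have "\<not> y" using not_persolus_adjacent_ones[of 0] w xyzv True by auto
    moreover have "\<not> z" using not_persolus_lonely_zero[of 1] w xyzv True \<open>\<not> y\<close> by auto
    ultimately have "v \<in> tails00 n"
      using w xyzv True persolus_reduce_00(2) unfolding tails00_def by simp
    then show ?thesis using xyzv True \<open>\<not> y\<close> \<open>\<not> z\<close> by auto
  qed
next
  fix w assume "w \<in> (\<lambda>v. False # False # v) ` tails00 (n + 1) \<union> (\<lambda>v. True # False # False # v) ` tails00 n"
  then show "w \<in> persolus_strings (n + 3)"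
    unfolding tails00_def persolus_strings_def by (auto simp: persolus_reduce_00)
qed

lemma sum_tails00_Suc3:
  "(\<Sum>w\<in>tails00 (n + 3). f w) = (\<Sum>w\<in>tails00 (n + 2). f (False # w)) + (\<Sum>w\<in>tails00 n. f (True # False # False # w))"
  unfolding tails00_Suc3
  by (subst sum.union_disjoint) (auto simp: finite_tails00 sum.reindex inj_on_def)

lemma sum_persolus_strings_Suc3:
  "(\<Sum>w\<in>persolus_strings (n + 3). f w) = (\<Sum>w\<in>tails00 (n + 1). f (False # False # w)) + (\<Sum>w\<in>tails00 n. f (True # False # False # w))"
  unfolding persolus_strings_Suc3
  by (subst sum.union_disjoint) (auto simp: finite_tails00 sum.reindex inj_on_def)

lemma bitsum_Cons: "bitsum (False # w) = bitsum w" "bitsum (True # w) = Suc (bitsum w)"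
  by (simp_all add: bitsum_def)

lemma sum_bitsum_persolus_strings_Suc6:
  "(\<Sum>w\<in>persolus_strings (n + 6). f (bitsum w))
     = (\<Sum>w\<in>persolus_strings (n + 5). f (bitsum w)) + (\<Sum>w\<in>persolus_strings (n + 3). f (Suc (bitsum w)))"
proof -
  have p: "(\<Sum>w\<in>persolus_strings (Suc (Suc (Suc m))). g (bitsum w))
      = (\<Sum>w\<in>tails00 (Suc m). g (bitsum w)) + (\<Sum>w\<in>tails00 m. g (Suc (bitsum w)))" for m g
    using sum_persolus_strings_Suc3[where n = m and f = "\<lambda>w. g (bitsum w)"] by (simp add: bitsum_Cons numeral_3_eq_3)
  have t: "(\<Sum>w\<in>tails00 (Suc (Suc (Suc m))). g (bitsum w))
      = (\<Sum>w\<in>tails00 (Suc (Suc m)). g (bitsum w)) + (\<Sum>w\<in>tails00 m. g (Suc (bitsum w)))" for m g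
    using sum_tails00_Suc3[where n = m and f = "\<lambda>w. g (bitsum w)"] by (simp add: bitsum_Cons numeral_3_eq_3 numeral_2_eq_2)
  have "n + 6 = Suc (Suc (Suc (Suc (Suc (Suc n)))))" "n + 5 = Suc (Suc (Suc (Suc (Suc n))))"
    "n + 3 = Suc (Suc (Suc n))" by simp_all
  then show ?thesis
    by (simp only: p[of f "Suc (Suc (Suc n))"] t[of f "Suc n"] t[of "\<lambda>b. f (Suc b)" n]
        p[of f "Suc (Suc n)"] p[of "\<lambda>b. f (Suc b)" n] ac_simps)
qed

definition persolus_moment :: "nat \<Rightarrow> nat \<Rightarrow> real" where
  "persolus_moment j n = (\<Sum>w\<in>persolus_strings n. real (bitsum w) ^ j)"

lemma persolus_moment_Suc6:
  "persolus_moment 0 (n + 6) = persolus_moment 0 (n + 5) + persolus_moment 0 (n + 3)"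
  "persolus_moment 1 (n + 6) = persolus_moment 1 (n + 5) + persolus_moment 1 (n + 3) + persolus_moment 0 (n + 3)"
  "persolus_moment 2 (n + 6) = persolus_moment 2 (n + 5) + persolus_moment 2 (n + 3)
     + 2 * persolus_moment 1 (n + 3) + persolus_moment 0 (n + 3)"
proof -
  have rec: "persolus_moment j (n + 6)
      = persolus_moment j (n + 5) + (\<Sum>w\<in>persolus_strings (n + 3). real (Suc (bitsum w)) ^ j)" for j
    unfolding persolus_moment_def by (rule sum_bitsum_persolus_strings_Suc6)
  have "(\<Sum>w\<in>persolus_strings (n + 3). real (Suc (bitsum w)) ^ 0) = persolus_moment 0 (n + 3)"
    "(\<Sum>w\<in>persolus_strings (n + 3). real (Suc (bitsum w)) ^ 1) = persolus_moment 1 (n + 3) + persolus_moment 0 (n + 3)"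
    "(\<Sum>w\<in>persolus_strings (n + 3). real (Suc (bitsum w)) ^ 2)
       = persolus_moment 2 (n + 3) + 2 * persolus_moment 1 (n + 3) + persolus_moment 0 (n + 3)"
    by (simp_all add: persolus_moment_def power2_sum sum.distrib sum_distrib_left)
  then show "persolus_moment 0 (n + 6) = persolus_moment 0 (n + 5) + persolus_moment 0 (n + 3)"
    "persolus_moment 1 (n + 6) = persolus_moment 1 (n + 5) + persolus_moment 1 (n + 3) + persolus_moment 0 (n + 3)"
    "persolus_moment 2 (n + 6) = persolus_moment 2 (n + 5) + persolus_moment 2 (n + 3)
       + 2 * persolus_moment 1 (n + 3) + persolus_moment 0 (n + 3)"
    by (simp_all only: rec add.assoc)
qed

lemma persolus_moment_0: "persolus_moment 0 n = card (persolus_strings n)"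
  by (simp add: persolus_moment_def)

lemma one_le_persolus_moment0: "1 \<le> persolus_moment 0 (n + 2)"
proof -
  have "replicate (n + 2) False \<in> persolus_strings (n + 2)"
    using replicate_in_tails00[of n] unfolding tails00_def persolus_strings_def by (simp add: numeral_eq_Suc)
  then have "1 \<le> card (persolus_strings (n + 2))"
    using finite_persolus_strings by (simp add: Suc_le_eq card_gt_0_iff) blast
  then show ?thesis unfolding persolus_moment_0 by simp
qed

lemma sum_power2_deviation_div_card:
  fixes f :: "'a \<Rightarrow> real"
  assumes "finite X" "X \<noteq> {}"
  defines "\<mu> \<equiv> (\<Sum>x\<in>X. f x) / card X"
  shows "(\<Sum>x\<in>X. (f x - \<mu>)\<^sup>2) / card X = (\<Sum>x\<in>X. (f x)\<^sup>2) / card X - \<mu>\<^sup>2"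
proof -
  have N: "real (card X) > 0" using assms by (simp add: card_gt_0_iff)
  have "(\<Sum>x\<in>X. (f x - \<mu>)\<^sup>2) = (\<Sum>x\<in>X. (f x)\<^sup>2) - 2 * \<mu> * (\<Sum>x\<in>X. f x) + card X * \<mu>\<^sup>2"
    by (simp add: power2_diff sum.distrib sum_subtractf sum_distrib_left sum_distrib_right mult_ac)
  also have "(\<Sum>x\<in>X. f x) = \<mu> * card X" unfolding \<mu>_def using N by simp
  finally show ?thesis using N by (simp add: field_simps power2_eq_square)
qed

lemma ES_eq: "ES n = persolus_moment 1 n / persolus_moment 0 n"
  unfolding ES_def persolus_moment_def by simp

lemma VS_eq:
  "VS (n + 2) = persolus_moment 2 (n + 2) / persolus_moment 0 (n + 2) - (ES (n + 2))\<^sup>2"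
proof -
  have "persolus_strings (n + 2) \<noteq> {}"
    using one_le_persolus_moment0[of n] unfolding persolus_moment_def by auto
  then have "VS (n + 2) = (\<Sum>w\<in>persolus_strings (n + 2). (real (bitsum w))\<^sup>2) / card (persolus_strings (n + 2)) - (ES (n + 2))\<^sup>2"
    unfolding VS_def ES_def by (rule sum_power2_deviation_div_card[OF finite_persolus_strings])
  then show ?thesis unfolding persolus_moment_0 by (simp only: persolus_moment_def)
qed

section \<open>Linear recurrences with bounded forcing\<close>

lemma Bseq_plus: "Bseq f \<Longrightarrow> Bseq g \<Longrightarrow> Bseq (\<lambda>n. f n + g n)"
  for f g :: "nat \<Rightarrow> 'a::real_normed_vector"
  by (simp add: Bseq_eq_bounded bounded_plus_comp)

lemma Bseq_const_mult: "Bseq f \<Longrightarrow> Bseq (\<lambda>n. c * f n)"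
  for f :: "nat \<Rightarrow> 'a::real_normed_field"
  by (rule Bseq_mult[OF Bfun_const])

lemma bounded_by_contraction:
  fixes u :: "nat \<Rightarrow> real"
  assumes c: "0 \<le> c" "c < 1" and step: "\<And>n. u (Suc n) \<le> c * u n + M"
  shows "u n \<le> max (u 0) (M / (1 - c))"
proof (induction n)
  case (Suc n)
  let ?B = "max (u 0) (M / (1 - c))"
  have "M = (1 - c) * (M / (1 - c))" using c by simp
  also have "\<dots> \<le> (1 - c) * ?B" using c by (intro mult_left_mono) auto
  finally have "c * ?B + M \<le> ?B" by (simp add: algebra_simps)
  moreover have "c * u n \<le> c * ?B" using Suc c by (intro mult_left_mono) auto
  ultimately show ?case using step[of n] by linarith
qed simp

text \<open>With complex conjugate characteristic roots \<open>z, cnj z\<close> of modulus \<open>sqrt q < 1\<close>, the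
  sequence \<open>x (n + 1) - z * x n\<close> obeys a contracting first order recurrence, and then so does \<open>x\<close>.\<close>
lemma Bseq_second_order_recurrence:
  fixes x :: "nat \<Rightarrow> real"
  assumes q: "0 < q" "q < 1" and pq: "p\<^sup>2 < 4 * q"
    and forcing: "Bseq (\<lambda>n. x (n + 2) + p * x (n + 1) + q * x n)"
  shows "Bseq x"
proof -
  obtain M where M: "\<And>n. \<bar>x (n + 2) + p * x (n + 1) + q * x n\<bar> \<le> M"
    using forcing by (auto simp: Bseq_def)
  define z where "z = Complex (- p / 2) (sqrt (4 * q - p\<^sup>2) / 2)"
  have z_re_im: "Re z ^ 2 + Im z ^ 2 = q" "2 * Re z = - p"
    unfolding z_def using pq by (simp_all add: power_divide field_simps)
  then have z_roots: "cnj z * z = q" "cnj z + p = - z"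
    by (simp_all add: complex_eq_iff power2_eq_square)
  have norm_z: "cmod z = sqrt q" "cmod (cnj z) = sqrt q"
    using z_re_im(1) by (simp_all add: cmod_def)
  have sq: "0 \<le> sqrt q" "sqrt q < 1" using q by auto
  define w where "w n = complex_of_real (x (n + 1)) - z * x n" for n
  have w_step: "w (Suc n) = cnj z * w n + (x (n + 2) + p * x (n + 1) + q * x n)" for n
  proof -
    have "cnj z * w n + (x (n + 2) + p * x (n + 1) + q * x n) - w (Suc n)
        = (cnj z + p + z) * x (n + 1) - (cnj z * z - q) * x n"
      unfolding w_def by (simp add: algebra_simps)
    then show ?thesis using z_roots by simp
  qed
  have "cmod (w (Suc n)) \<le> sqrt q * cmod (w n) + M" for n
  proof -
    have "cmod (w (Suc n)) \<le> cmod (cnj z * w n) + \<bar>x (n + 2) + p * x (n + 1) + q * x n\<bar>"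
      unfolding w_step by (metis norm_of_real norm_triangle_ineq of_real_add of_real_mult)
    then show ?thesis using M[of n] by (simp add: norm_mult norm_z)
  qed
  then have w_bound: "cmod (w n) \<le> max (cmod (w 0)) (M / (1 - sqrt q))" for n
    by (rule bounded_by_contraction[OF sq])
  define W where "W = max (cmod (w 0)) (M / (1 - sqrt q))"
  have "\<bar>x (Suc n)\<bar> \<le> sqrt q * \<bar>x n\<bar> + W" for n
  proof -
    have "\<bar>x (Suc n)\<bar> = cmod (w n + z * x n)" unfolding w_def by simp
    also have "\<dots> \<le> cmod (w n) + sqrt q * \<bar>x n\<bar>" by (metis norm_triangle_ineq norm_mult norm_of_real norm_z(1))
    finally show ?thesis using w_bound[of n] unfolding W_def by simp
  qed
  then have "\<bar>x n\<bar> \<le> max \<bar>x 0\<bar> (W / (1 - sqrt q))" for n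
    by (rule bounded_by_contraction[OF sq])
  then show ?thesis by (intro BseqI') simp
qed

text \<open>The only bounded solution of \<open>u (n + 1) = \<alpha> u n + y n\<close> is
  \<open>u n = - (\<Sum>j. y (n + j) / \<alpha> ^ (j + 1))\<close>; every other solution differs from it by a multiple of \<open>\<alpha> ^ n\<close>.\<close>
lemma first_order_recurrence_asymp:
  fixes s y :: "nat \<Rightarrow> real"
  assumes \<alpha>: "1 < \<alpha>" and y: "Bseq y" and step: "\<And>n. s (Suc n) = \<alpha> * s n + y n"
  obtains K where "Bseq (\<lambda>n. s n - K * \<alpha> ^ n)"
proof -
  obtain M where M: "\<And>n. \<bar>y n\<bar> \<le> M" using y by (auto simp: Bseq_def)
  define r where "r = 1 / \<alpha>"
  have r: "0 < r" "r < 1" "\<alpha> * r = 1" unfolding r_def using \<alpha> by auto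
  have geom: "summable (\<lambda>j. M * r ^ j)" using r by simp
  have term_bound: "\<bar>y (n + j) * r ^ j\<bar> \<le> M * r ^ j" for n j
    using M[of "n + j"] r by (simp add: abs_mult mult_right_mono)
  have abs_summ: "summable (\<lambda>j. \<bar>y (n + j) * r ^ j\<bar>)" for n
    by (rule summable_comparison_test'[OF geom]) (simp add: term_bound)
  have summ: "summable (\<lambda>j. y (n + j) * r ^ j)" for n
    by (rule summable_rabs_cancel[OF abs_summ])
  define u where "u n = - r * (\<Sum>j. y (n + j) * r ^ j)" for n
  have u_step: "u (Suc n) = \<alpha> * u n + y n" for n
  proof -
    have "(\<Sum>j. y (n + Suc j) * r ^ Suc j) = (\<Sum>j. y (n + j) * r ^ j) - y n"
      by (subst suminf_split_head[OF summ]) simp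
    then have "(\<Sum>j. y (Suc n + j) * r ^ j) = ((\<Sum>j. y (n + j) * r ^ j) - y n) / r"
      using r suminf_mult[OF summ[of "Suc n"], of r] by (simp add: field_simps mult_ac)
    then show ?thesis unfolding u_def using r by (simp add: field_simps)
  qed
  have u_bound: "\<bar>u n\<bar> \<le> r * (M / (1 - r))" for n
  proof -
    have "\<bar>\<Sum>j. y (n + j) * r ^ j\<bar> \<le> (\<Sum>j. \<bar>y (n + j) * r ^ j\<bar>)"
      by (rule summable_rabs[OF abs_summ])
    also have "\<dots> \<le> (\<Sum>j. M * r ^ j)"
      by (rule suminf_le[OF term_bound abs_summ geom])
    also have "\<dots> = M / (1 - r)"
      using r by (simp add: suminf_mult suminf_geometric)
    finally have "r * \<bar>\<Sum>j. y (n + j) * r ^ j\<bar> \<le> r * (M / (1 - r))"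
      using r by (intro mult_left_mono) auto
    then show ?thesis unfolding u_def using r by (simp add: abs_mult)
  qed
  have "s n - u n = (s 0 - u 0) * \<alpha> ^ n" for n
  proof (induction n)
    case (Suc n)
    have "s (Suc n) - u (Suc n) = \<alpha> * (s n - u n)" by (simp add: step u_step algebra_simps)
    then show ?case using Suc by simp
  qed simp
  then have "Bseq (\<lambda>n. s n - (s 0 - u 0) * \<alpha> ^ n)"
    using u_bound by (intro BseqI'[of _ "r * (M / (1 - r))"]) (simp add: algebra_simps)
  then show ?thesis by (rule that)
qed

lemma Bseq_mult_tendsto_zero: "Bseq f \<Longrightarrow> g \<longlonglongrightarrow> 0 \<Longrightarrow> (\<lambda>n. f n * g n) \<longlonglongrightarrow> (0::real)"
  using bounded_bilinear.Bfun_prod_Zfun[OF bounded_bilinear_mult] by (simp add: tendsto_Zfun_iff)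

lemma Bseq_div_power_tendsto_zero:
  fixes e :: "nat \<Rightarrow> real"
  assumes "1 < \<alpha>" "Bseq e"
  shows "(\<lambda>n. e n / \<alpha> ^ n) \<longlonglongrightarrow> 0" "(\<lambda>n. real n * (e n / \<alpha> ^ n)) \<longlonglongrightarrow> 0"
proof -
  have "(\<lambda>n. e n * inverse (\<alpha> ^ n)) \<longlonglongrightarrow> 0"
    using assms by (intro Bseq_mult_tendsto_zero LIMSEQ_inverse_realpow_zero)
  then show "(\<lambda>n. e n / \<alpha> ^ n) \<longlonglongrightarrow> 0" by (simp add: field_simps)
  have "(\<lambda>n. e n * (real n / \<alpha> ^ n)) \<longlonglongrightarrow> 0"
    using assms by (intro Bseq_mult_tendsto_zero lim_n_over_pown) auto
  then show "(\<lambda>n. real n * (e n / \<alpha> ^ n)) \<longlonglongrightarrow> 0" by (simp add: field_simps)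
qed

section \<open>Mean and variance from asymptotic expansions\<close>

lemma tendsto_zero_of_real_mult:
  fixes f :: "nat \<Rightarrow> real"
  assumes "(\<lambda>m. real m * f m) \<longlonglongrightarrow> 0"
  shows "f \<longlonglongrightarrow> 0"
proof -
  have "(\<lambda>m. real m * f m * (1 / real m)) \<longlonglongrightarrow> 0 * 0"
    using assms lim_inverse_n' by (rule tendsto_mult)
  moreover have "\<forall>\<^sub>F m in sequentially. real m * f m * (1 / real m) = f m"
    using eventually_gt_at_top[of 0] by eventually_elim simp
  ultimately show ?thesis by (simp add: Lim_transform_eventually)
qed

lemma mean_limit_normalized:
  fixes n s1 :: "nat \<Rightarrow> real" and a b1 b0 :: real
  assumes a: "0 < a" and n: "n \<longlonglongrightarrow> a" and s1: "(\<lambda>m. s1 m - (b1 * m + b0)) \<longlonglongrightarrow> 0"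
  shows "(\<lambda>m. s1 m / n m / m) \<longlonglongrightarrow> b1 / a"
proof -
  define u1 where "u1 m = s1 m - (b1 * m + b0)" for m
  have "(\<lambda>m. (b1 + (b0 + u1 m) * (1 / real m)) / n m) \<longlonglongrightarrow> (b1 + (b0 + 0) * 0) / a"
    using s1 lim_inverse_n' n a unfolding u1_def by (intro tendsto_intros) auto
  moreover have "\<forall>\<^sub>F m in sequentially. (b1 + (b0 + u1 m) * (1 / real m)) / n m = s1 m / n m / m"
    using eventually_gt_at_top[of 0] order_tendstoD(1)[OF n a]
    by eventually_elim (simp add: u1_def field_simps)
  ultimately show ?thesis by (simp add: Lim_transform_eventually)
qed

text \<open>The hypothesis \<open>c2 * a = b1\<^sup>2\<close> cancels the terms of order \<open>m\<^sup>2\<close> in \<open>s2 * n - s1\<^sup>2\<close>.\<close>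
lemma variance_limit_normalized:
  fixes n s1 s2 :: "nat \<Rightarrow> real" and a b1 b0 c2 c1 c0 :: real
  assumes a: "0 < a" and c2: "c2 * a = b1\<^sup>2"
    and n: "(\<lambda>m. real m * (n m - a)) \<longlonglongrightarrow> 0"
    and s1: "(\<lambda>m. s1 m - (b1 * m + b0)) \<longlonglongrightarrow> 0"
    and s2: "(\<lambda>m. s2 m - (c2 * (real m)\<^sup>2 + c1 * m + c0)) \<longlonglongrightarrow> 0"
  shows "(\<lambda>m. (s2 m / n m - (s1 m / n m)\<^sup>2) / m) \<longlonglongrightarrow> (a * c1 - 2 * b1 * b0) / a\<^sup>2"
proof -
  define u where "u m = n m - a" for m
  define u1 where "u1 m = s1 m - (b1 * m + b0)" for m
  define u2 where "u2 m = s2 m - (c2 * (real m)\<^sup>2 + c1 * m + c0)" for m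
  define X where "X = a * c1 - 2 * b1 * b0"
  define R where "R m = (X + c2 * (real m * u m) + c1 * u m - 2 * b1 * u1 m
      + ((c0 + u2 m) * (a + u m) - (b0 + u1 m)\<^sup>2) * (1 / real m)) / (n m)\<^sup>2" for m
  have u: "u \<longlonglongrightarrow> 0" using n unfolding u_def by (rule tendsto_zero_of_real_mult)
  then have n_lim: "n \<longlonglongrightarrow> a" unfolding u_def by (rule LIM_zero_cancel)
  have "R \<longlonglongrightarrow> (X + c2 * 0 + c1 * 0 - 2 * b1 * 0 + ((c0 + 0) * (a + 0) - (b0 + 0)\<^sup>2) * 0) / a\<^sup>2"
    unfolding R_def using n u s1 s2 lim_inverse_n' n_lim a unfolding u_def u1_def u2_def
    by (intro tendsto_intros) auto
  moreover have "\<forall>\<^sub>F m in sequentially. R m = (s2 m / n m - (s1 m / n m)\<^sup>2) / m"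
    using eventually_gt_at_top[of 0] order_tendstoD(1)[OF n_lim a]
  proof eventually_elim
    case (elim m)
    have "s2 m * n m - (s1 m)\<^sup>2 - (real m * (X + c2 * (real m * u m) + c1 * u m - 2 * b1 * u1 m)
        + ((c0 + u2 m) * (a + u m) - (b0 + u1 m)\<^sup>2)) = (c2 * a - b1\<^sup>2) * (real m)\<^sup>2"
      unfolding X_def u_def u1_def u2_def by (simp add: algebra_simps power2_eq_square)
    then have "s2 m * n m - (s1 m)\<^sup>2 = real m * (X + c2 * (real m * u m) + c1 * u m - 2 * b1 * u1 m)
        + ((c0 + u2 m) * (a + u m) - (b0 + u1 m)\<^sup>2)" using c2 by simp
    then show ?case unfolding R_def using elim by (simp add: field_simps power2_eq_square)
  qed
  ultimately show ?thesis unfolding X_def by (simp add: Lim_transform_eventually)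
qed

lemma mean_variance_limits:
  fixes n s1 s2 :: "nat \<Rightarrow> real" and a b1 b0 c2 c1 c0 :: real
  assumes \<alpha>: "1 < \<alpha>" and a: "0 < a" and c2: "c2 * a = b1\<^sup>2"
    and n: "Bseq (\<lambda>m. n m - \<alpha> ^ m * a)"
    and s1: "Bseq (\<lambda>m. s1 m - \<alpha> ^ m * (b1 * m + b0))"
    and s2: "Bseq (\<lambda>m. s2 m - \<alpha> ^ m * (c2 * (real m)\<^sup>2 + c1 * m + c0))"
  shows "(\<lambda>m. s1 m / n m / m) \<longlonglongrightarrow> b1 / a"
    and "(\<lambda>m. (s2 m / n m - (s1 m / n m)\<^sup>2) / m) \<longlonglongrightarrow> (a * c1 - 2 * b1 * b0) / a\<^sup>2"
proof -
  have pow: "\<alpha> ^ m \<noteq> 0" for m using \<alpha> by simp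
  define n' s1' s2' where "n' m = n m / \<alpha> ^ m" and "s1' m = s1 m / \<alpha> ^ m" and "s2' m = s2 m / \<alpha> ^ m" for m
  have ratio: "s1 m / n m = s1' m / n' m" "s2 m / n m = s2' m / n' m" for m
    unfolding n'_def s1'_def s2'_def using pow[of m] by simp_all
  have "(\<lambda>m. real m * ((n m - \<alpha> ^ m * a) / \<alpha> ^ m)) \<longlonglongrightarrow> 0"
    "(\<lambda>m. (s1 m - \<alpha> ^ m * (b1 * m + b0)) / \<alpha> ^ m) \<longlonglongrightarrow> 0"
    "(\<lambda>m. (s2 m - \<alpha> ^ m * (c2 * (real m)\<^sup>2 + c1 * m + c0)) / \<alpha> ^ m) \<longlonglongrightarrow> 0"
    using Bseq_div_power_tendsto_zero[OF \<alpha>] n s1 s2 by blast+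
  then have n': "(\<lambda>m. real m * (n' m - a)) \<longlonglongrightarrow> 0"
    and s1': "(\<lambda>m. s1' m - (b1 * m + b0)) \<longlonglongrightarrow> 0"
    and s2': "(\<lambda>m. s2' m - (c2 * (real m)\<^sup>2 + c1 * m + c0)) \<longlonglongrightarrow> 0"
    unfolding n'_def s1'_def s2'_def using \<alpha> by (simp_all add: diff_divide_distrib)
  have "n' \<longlonglongrightarrow> a" using tendsto_zero_of_real_mult[OF n'] by (rule LIM_zero_cancel)
  then show "(\<lambda>m. s1 m / n m / m) \<longlonglongrightarrow> b1 / a"
    unfolding ratio using s1' by (rule mean_limit_normalized[OF a])
  show "(\<lambda>m. (s2 m / n m - (s1 m / n m)\<^sup>2) / m) \<longlonglongrightarrow> (a * c1 - 2 * b1 * b0) / a\<^sup>2"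
    unfolding ratio by (rule variance_limit_normalized[OF a c2 n' s1' s2'])
qed

lemma tendsto_div_real_offset:
  fixes f :: "nat \<Rightarrow> real"
  assumes "(\<lambda>m. f (m + k) / real m) \<longlonglongrightarrow> L"
  shows "(\<lambda>n. f n / real n) \<longlonglongrightarrow> L"
proof (rule LIMSEQ_offset[where k = k])
  have "(\<lambda>m. real m / real (m + k)) \<longlonglongrightarrow> 1" by real_asymp
  from tendsto_mult[OF assms this]
  have "(\<lambda>m. f (m + k) / real m * (real m / real (m + k))) \<longlonglongrightarrow> L" by simp
  moreover have "\<forall>\<^sub>F m in sequentially. f (m + k) / real m * (real m / real (m + k)) = f (m + k) / real (m + k)"
    using eventually_gt_at_top[of 0] by eventually_elim simp
  ultimately show "(\<lambda>m. f (m + k) / real (m + k)) \<longlonglongrightarrow> L" by (rule Lim_transform_eventually)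
qed

section \<open>Narayana's recurrence\<close>

context
  fixes \<alpha> :: real
  assumes \<alpha>_cubic: "\<alpha> ^ 3 = \<alpha>\<^sup>2 + 1" and \<alpha>_gt_1: "1 < \<alpha>"
begin

text \<open>Factor \<open>X\<^sup>3 - X\<^sup>2 - 1 = (X - \<alpha>) (X\<^sup>2 + p X + q)\<close> with \<open>p = \<alpha> - 1\<close> and
  \<open>q = \<alpha>\<^sup>2 - \<alpha> = 1 / \<alpha>\<close>; the quadratic factor has complex roots of modulus \<open>sqrt q < 1\<close>.\<close>
lemma narayana_recurrence_asymp:
  fixes x :: "nat \<Rightarrow> real"
  assumes "Bseq (\<lambda>n. x (n + 3) - x (n + 2) - x n)"
  obtains K where "Bseq (\<lambda>n. x n - K * \<alpha> ^ n)"
proof -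
  define p where "p = \<alpha> - 1"
  define q where "q = \<alpha>\<^sup>2 - \<alpha>"
  have q_alpha: "q * \<alpha> = 1" using \<alpha>_cubic by (simp add: q_def algebra_simps power2_eq_square power3_eq_cube)
  have q: "0 < q" "q < 1"
  proof -
    show "0 < q" using \<alpha>_gt_1 by (simp add: q_def power2_eq_square)
    have "q = 1 / \<alpha>" using q_alpha \<alpha>_gt_1 by (simp add: field_simps)
    then show "q < 1" using \<alpha>_gt_1 by simp
  qed
  have "0 < (3 * \<alpha> + 1) * (\<alpha> - 1)" using \<alpha>_gt_1 by simp
  then have pq: "p\<^sup>2 < 4 * q" unfolding p_def q_def by (simp add: power2_eq_square algebra_simps)
  define s where "s n = x (n + 2) + p * x (n + 1) + q * x n" for n
  have s_step: "s (Suc n) = \<alpha> * s n + (x (n + 3) - x (n + 2) - x n)" for n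
  proof -
    have "s (Suc n) - (\<alpha> * s n + (x (n + 3) - x (n + 2) - x n)) = (\<alpha>\<^sup>2 + 1 - \<alpha> ^ 3) * x n"
      unfolding s_def p_def q_def by (simp add: algebra_simps power2_eq_square power3_eq_cube numeral_eq_Suc)
    then show ?thesis using \<alpha>_cubic by simp
  qed
  obtain K' where K': "Bseq (\<lambda>n. s n - K' * \<alpha> ^ n)"
    using first_order_recurrence_asymp[OF \<alpha>_gt_1 assms s_step] by blast
  have root_pos: "\<alpha>\<^sup>2 + p * \<alpha> + q > 0" using q \<alpha>_gt_1 unfolding p_def by (intro add_pos_pos) auto
  define K where "K = K' / (\<alpha>\<^sup>2 + p * \<alpha> + q)"
  have "(x (n + 2) - K * \<alpha> ^ (n + 2)) + p * (x (n + 1) - K * \<alpha> ^ (n + 1)) + q * (x n - K * \<alpha> ^ n)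
      = s n - K' * \<alpha> ^ n" for n
  proof -
    have "K * (\<alpha>\<^sup>2 + p * \<alpha> + q) = K'" using root_pos unfolding K_def by simp
    moreover have "(x (n + 2) - K * \<alpha> ^ (n + 2)) + p * (x (n + 1) - K * \<alpha> ^ (n + 1)) + q * (x n - K * \<alpha> ^ n)
        = s n - K * (\<alpha>\<^sup>2 + p * \<alpha> + q) * \<alpha> ^ n"
      unfolding s_def by (simp add: power_add power2_eq_square algebra_simps)
    ultimately show ?thesis by simp
  qed
  then have "Bseq (\<lambda>n. x n - K * \<alpha> ^ n)"
    using Bseq_second_order_recurrence[OF q pq, of "\<lambda>n. x n - K * \<alpha> ^ n"] K' by simp
  then show ?thesis by (rule that)
qed

text \<open>A forcing term \<open>\<alpha>\<^sup>n (a n + b)\<close> is matched by the particular solution \<open>\<alpha>\<^sup>n (c\<^sub>2 n\<^sup>2 + c\<^sub>1 n)\<close>.\<close>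
lemma narayana_recurrence_quadratic_asymp:
  fixes x :: "nat \<Rightarrow> real" and a b c1 c2 :: real
  assumes forcing: "Bseq (\<lambda>n. x (n + 3) - x (n + 2) - x n - \<alpha> ^ n * (a * real n + b))"
    and c2: "2 * (\<alpha>\<^sup>2 + 3) * c2 = a" and c1: "(\<alpha>\<^sup>2 + 3) * c1 + (5 * \<alpha>\<^sup>2 + 9) * c2 = b"
  obtains c0 where "Bseq (\<lambda>n. x n - \<alpha> ^ n * (c2 * (real n)\<^sup>2 + c1 * real n + c0))"
proof -
  define y where "y n = x n - \<alpha> ^ n * (c2 * (real n)\<^sup>2 + c1 * real n)" for n
  have lin: "(m + 3) * \<alpha> ^ 3 - (m + 2) * \<alpha>\<^sup>2 - m = \<alpha>\<^sup>2 + 3" for m :: real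
    using \<alpha>_cubic by algebra
  have quad: "(m + 3)\<^sup>2 * \<alpha> ^ 3 - (m + 2)\<^sup>2 * \<alpha>\<^sup>2 - m\<^sup>2 = 2 * (\<alpha>\<^sup>2 + 3) * m + 5 * \<alpha>\<^sup>2 + 9" for m :: real
    using \<alpha>_cubic by algebra
  have y_forcing: "y (n + 3) - y (n + 2) - y n = x (n + 3) - x (n + 2) - x n - \<alpha> ^ n * (a * real n + b)" for n
  proof -
    have "y (n + 3) - y (n + 2) - y n = x (n + 3) - x (n + 2) - x n - \<alpha> ^ n *
        (c2 * ((real n + 3)\<^sup>2 * \<alpha> ^ 3 - (real n + 2)\<^sup>2 * \<alpha>\<^sup>2 - (real n)\<^sup>2)
         + c1 * ((real n + 3) * \<alpha> ^ 3 - (real n + 2) * \<alpha>\<^sup>2 - real n))"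
      unfolding y_def by (simp add: power_add power2_eq_square power3_eq_cube algebra_simps)
    then show ?thesis unfolding lin quad c2[symmetric] c1[symmetric] by (simp add: algebra_simps)
  qed
  have "Bseq (\<lambda>n. y (n + 3) - y (n + 2) - y n)" using forcing by (simp only: y_forcing)
  then obtain c0 where "Bseq (\<lambda>n. y n - c0 * \<alpha> ^ n)" by (rule narayana_recurrence_asymp)
  then show ?thesis by (intro that[of c0]) (simp add: y_def algebra_simps)
qed

lemma narayana_dominant_coeff_pos:
  fixes x :: "nat \<Rightarrow> real"
  assumes step: "\<And>n. x (n + 3) = x (n + 2) + x n" and pos: "\<And>n. 1 \<le> x n"
    and asymp: "Bseq (\<lambda>n. x n - a * \<alpha> ^ n)"
  shows "0 < a"
proof (rule ccontr)
  assume "\<not> 0 < a"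
  then have "x n \<le> x n - a * \<alpha> ^ n" for n using \<alpha>_gt_1 by (simp add: mult_nonpos_nonneg)
  moreover obtain B where "\<And>n. \<bar>x n - a * \<alpha> ^ n\<bar> \<le> B" using asymp by (auto simp: Bseq_def)
  ultimately have bounded: "x n \<le> B" for n by (meson abs_ge_self order_trans)
  have grow: "real k \<le> x (3 * k)" for k
  proof (induction k)
    case (Suc k)
    then show ?case using step[of "3 * k"] pos[of "3 * k + 2"] by (simp add: add.commute)
  qed (use pos[of 0] in simp)
  obtain k :: nat where "B < k" using reals_Archimedean2 by blast
  then show False using grow[of k] bounded[of "3 * k"] by linarith
qed

lemma narayana_moments_asymp:
  fixes x0 x1 x2 :: "nat \<Rightarrow> real"
  assumes rec0: "\<And>m. x0 (m + 3) = x0 (m + 2) + x0 m"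
    and rec1: "\<And>m. x1 (m + 3) = x1 (m + 2) + x1 m + x0 m"
    and rec2: "\<And>m. x2 (m + 3) = x2 (m + 2) + x2 m + 2 * x1 m + x0 m"
    and pos: "\<And>m. 1 \<le> x0 m"
  obtains a b0 c1 c0 where "0 < a" "Bseq (\<lambda>m. x0 m - \<alpha> ^ m * a)"
    "Bseq (\<lambda>m. x1 m - \<alpha> ^ m * (a / (\<alpha>\<^sup>2 + 3) * real m + b0))"
    "Bseq (\<lambda>m. x2 m - \<alpha> ^ m * (a / (\<alpha>\<^sup>2 + 3)\<^sup>2 * (real m)\<^sup>2 + c1 * real m + c0))"
    "(a * c1 - 2 * (a / (\<alpha>\<^sup>2 + 3)) * b0) / a\<^sup>2 = (2 * \<alpha>\<^sup>2 + \<alpha> + 1) / (\<alpha>\<^sup>2 + 3) ^ 3"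
proof -
  define D where "D = \<alpha>\<^sup>2 + 3"
  have D: "0 < D" unfolding D_def by (simp add: add_nonneg_pos)
  have "Bseq (\<lambda>m. x0 (m + 3) - x0 (m + 2) - x0 m)" unfolding rec0 by simp
  then obtain a where a: "Bseq (\<lambda>m. x0 m - a * \<alpha> ^ m)" by (rule narayana_recurrence_asymp)
  have "0 < a" using rec0 pos a by (rule narayana_dominant_coeff_pos)
  have "Bseq (\<lambda>m. x1 (m + 3) - x1 (m + 2) - x1 m - \<alpha> ^ m * (0 * real m + a))"
    using a unfolding rec1 by (simp add: mult.commute)
  moreover have "2 * (\<alpha>\<^sup>2 + 3) * 0 = 0" "(\<alpha>\<^sup>2 + 3) * (a / D) + (5 * \<alpha>\<^sup>2 + 9) * 0 = a"
    using D by (simp_all add: D_def)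
  ultimately obtain b0 where b: "Bseq (\<lambda>m. x1 m - \<alpha> ^ m * (0 * (real m)\<^sup>2 + a / D * m + b0))"
    by (rule narayana_recurrence_quadratic_asymp)
  define c1 where "c1 = (2 * b0 + a - (5 * \<alpha>\<^sup>2 + 9) * (a / D\<^sup>2)) / D"
  have "Bseq (\<lambda>m. 2 * (x1 m - \<alpha> ^ m * (0 * (real m)\<^sup>2 + a / D * m + b0)) + (x0 m - a * \<alpha> ^ m))"
    using a b by (intro Bseq_plus Bseq_const_mult)
  then have "Bseq (\<lambda>m. x2 (m + 3) - x2 (m + 2) - x2 m - \<alpha> ^ m * (2 * a / D * m + (2 * b0 + a)))"
    unfolding rec2 by (simp add: algebra_simps)
  moreover have "2 * (\<alpha>\<^sup>2 + 3) * (a / D\<^sup>2) = 2 * a / D"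
    "(\<alpha>\<^sup>2 + 3) * c1 + (5 * \<alpha>\<^sup>2 + 9) * (a / D\<^sup>2) = 2 * b0 + a"
    using D unfolding c1_def D_def[symmetric] by (simp_all add: field_simps power2_eq_square)
  ultimately obtain c0 where c: "Bseq (\<lambda>m. x2 m - \<alpha> ^ m * (a / D\<^sup>2 * (real m)\<^sup>2 + c1 * m + c0))"
    by (rule narayana_recurrence_quadratic_asymp)
  have "(a * c1 - 2 * (a / D) * b0) / a\<^sup>2 = (D\<^sup>2 - (5 * \<alpha>\<^sup>2 + 9)) / D ^ 3"
    using D \<open>0 < a\<close> unfolding c1_def by (simp add: field_simps power2_eq_square power3_eq_cube)
  also have "D\<^sup>2 - (5 * \<alpha>\<^sup>2 + 9) = 2 * \<alpha>\<^sup>2 + \<alpha> + 1" unfolding D_def using \<alpha>_cubic by algebra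
  finally have var: "(a * c1 - 2 * (a / D) * b0) / a\<^sup>2 = (2 * \<alpha>\<^sup>2 + \<alpha> + 1) / D ^ 3" .
  have a': "Bseq (\<lambda>m. x0 m - \<alpha> ^ m * a)" using a by (simp add: mult.commute)
  have b': "Bseq (\<lambda>m. x1 m - \<alpha> ^ m * (a / D * m + b0))" using b by simp
  from \<open>0 < a\<close> a' b' c var show ?thesis unfolding D_def by (rule that)
qed

lemma persolus_mean_variance_asymp:
  shows "(\<lambda>n. ES n / real n) \<longlonglongrightarrow> 1 / (\<alpha>\<^sup>2 + 3)"
    and "(\<lambda>n. VS n / real n) \<longlonglongrightarrow> (2 * \<alpha>\<^sup>2 + \<alpha> + 1) / (\<alpha>\<^sup>2 + 3) ^ 3"
proof -
  define x0 x1 x2 where "x0 m = persolus_moment 0 (m + 3)" and "x1 m = persolus_moment 1 (m + 3)"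
    and "x2 m = persolus_moment 2 (m + 3)" for m
  have rec: "x0 (m + 3) = x0 (m + 2) + x0 m" "x1 (m + 3) = x1 (m + 2) + x1 m + x0 m"
    "x2 (m + 3) = x2 (m + 2) + x2 m + 2 * x1 m + x0 m" for m
    using persolus_moment_Suc6[of m] unfolding x0_def x1_def x2_def by (simp_all add: ac_simps)
  have "1 \<le> x0 m" for m using one_le_persolus_moment0[of "Suc m"] by (simp add: x0_def numeral_3_eq_3)
  then obtain a b0 c1 c0 where a: "0 < a" and expansions: "Bseq (\<lambda>m. x0 m - \<alpha> ^ m * a)"
    "Bseq (\<lambda>m. x1 m - \<alpha> ^ m * (a / (\<alpha>\<^sup>2 + 3) * real m + b0))"
    "Bseq (\<lambda>m. x2 m - \<alpha> ^ m * (a / (\<alpha>\<^sup>2 + 3)\<^sup>2 * (real m)\<^sup>2 + c1 * real m + c0))"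
    and var_const: "(a * c1 - 2 * (a / (\<alpha>\<^sup>2 + 3)) * b0) / a\<^sup>2 = (2 * \<alpha>\<^sup>2 + \<alpha> + 1) / (\<alpha>\<^sup>2 + 3) ^ 3"
    by (rule narayana_moments_asymp[OF rec])
  have "a / (\<alpha>\<^sup>2 + 3)\<^sup>2 * a = (a / (\<alpha>\<^sup>2 + 3))\<^sup>2" by (simp add: power2_eq_square)
  note limits = mean_variance_limits[OF \<alpha>_gt_1 a this expansions]
  have "(\<lambda>m. ES (m + 3) / real m) \<longlonglongrightarrow> 1 / (\<alpha>\<^sup>2 + 3)"
    using limits(1) a unfolding ES_eq x0_def x1_def by simp
  then show "(\<lambda>n. ES n / real n) \<longlonglongrightarrow> 1 / (\<alpha>\<^sup>2 + 3)" by (rule tendsto_div_real_offset)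
  have "VS (m + 3) = x2 m / x0 m - (x1 m / x0 m)\<^sup>2" for m
    using VS_eq[of "Suc m"] unfolding ES_eq x0_def x1_def x2_def by (simp add: numeral_3_eq_3 numeral_2_eq_2)
  then have "(\<lambda>m. VS (m + 3) / real m) \<longlonglongrightarrow> (2 * \<alpha>\<^sup>2 + \<alpha> + 1) / (\<alpha>\<^sup>2 + 3) ^ 3"
    using limits(2) unfolding var_const by simp
  then show "(\<lambda>n. VS n / real n) \<longlonglongrightarrow> (2 * \<alpha>\<^sup>2 + \<alpha> + 1) / (\<alpha>\<^sup>2 + 3) ^ 3"
    by (rule tendsto_div_real_offset)
qed

end

section \<open>Closed forms\<close>

lemma supergolden_exists: "\<exists>\<alpha>::real. \<alpha> ^ 3 = \<alpha>\<^sup>2 + 1 \<and> 1 < \<alpha>"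
proof -
  have "\<exists>x::real. 1 \<le> x \<and> x \<le> 2 \<and> x ^ 3 - x\<^sup>2 - 1 = 0"
    by (rule IVT) (auto intro!: continuous_intros)
  then obtain x :: real where "1 \<le> x" "x ^ 3 - x\<^sup>2 - 1 = 0" by blast
  moreover from this have "x \<noteq> 1" by auto
  ultimately show ?thesis by (intro exI[of _ x]) auto
qed

lemma depressed_cubic_root_unique:
  fixes x y p s :: real
  assumes x: "x ^ 3 = p * x + s" and y: "y ^ 3 = p * y + s" and disc: "4 * p ^ 3 < 27 * s\<^sup>2"
  shows "x = y"
proof (rule ccontr)
  assume "x \<noteq> y"
  moreover have "(x - y) * (x\<^sup>2 + x * y + y\<^sup>2 - p) = 0"
    using x y by (simp add: algebra_simps power2_eq_square power3_eq_cube)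
  ultimately have p: "p = x\<^sup>2 + x * y + y\<^sup>2" by simp
  with x have s: "s = - x * y * (x + y)" by (simp add: algebra_simps power2_eq_square power3_eq_cube)
  have "4 * p ^ 3 - 27 * s\<^sup>2 = ((x - y) * (2 * x + y) * (x + 2 * y))\<^sup>2"
    unfolding p s by algebra
  then have "0 \<le> 4 * p ^ 3 - 27 * s\<^sup>2" by simp
  with disc show False by linarith
qed

lemma supergolden_mean_closed_form:
  fixes \<alpha> :: real
  assumes \<alpha>: "\<alpha> ^ 3 = \<alpha>\<^sup>2 + 1"
  shows "1 / (\<alpha>\<^sup>2 + 3) = (1/3) * (1 - root 3 ((31 + 3 * sqrt 93) / 1922) - root 3 ((31 - 3 * sqrt 93) / 1922))"
proof -
  define u where "u = root 3 ((31 + 3 * sqrt 93) / 1922)"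
  define v where "v = root 3 ((31 - 3 * sqrt 93) / 1922)"
  have "u * v = root 3 (((31 + 3 * sqrt 93) / 1922) * ((31 - 3 * sqrt 93) / 1922))"
    unfolding u_def v_def by (rule real_root_mult[symmetric])
  also have "\<dots> = root 3 ((1 / 31) ^ 3)" by (simp add: algebra_simps power2_eq_square[symmetric] power_divide)
  also have "\<dots> = 1 / 31" by (rule real_root_power_cancel) auto
  finally have uv: "u * v = 1 / 31" .
  have "(u + v) ^ 3 = 3 * (u * v) * (u + v) + (u ^ 3 + v ^ 3)" by algebra
  also have "u ^ 3 + v ^ 3 = 1 / 31" unfolding u_def v_def by (simp add: odd_real_root_pow field_simps)
  finally have cardano: "(u + v) ^ 3 = 3 / 31 * (u + v) + 1 / 31" unfolding uv by simp
  define x where "x = \<alpha>\<^sup>2 / (\<alpha>\<^sup>2 + 3)"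
  have D: "\<alpha>\<^sup>2 + 3 > 0" by (simp add: add_nonneg_pos)
  have "(x ^ 3 - 3 / 31 * x - 1 / 31) * (31 * (\<alpha>\<^sup>2 + 3) ^ 3) = 31 * \<alpha> ^ 6 - 3 * \<alpha>\<^sup>2 * (\<alpha>\<^sup>2 + 3)\<^sup>2 - (\<alpha>\<^sup>2 + 3) ^ 3"
  proof -
    have "x * (\<alpha>\<^sup>2 + 3) = \<alpha>\<^sup>2" unfolding x_def using D by simp
    then show ?thesis by algebra
  qed
  also have "\<dots> = 0" using \<alpha> by algebra
  finally have "x ^ 3 = 3 / 31 * x + 1 / 31" using D by simp
  then have "x = u + v" using cardano by (rule depressed_cubic_root_unique) (simp add: power_divide)
  then show ?thesis unfolding u_def v_def x_def using D by (simp add: field_simps)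
qed

lemma supergolden_variance_closed_form:
  fixes \<alpha> :: real
  assumes \<alpha>: "\<alpha> ^ 3 = \<alpha>\<^sup>2 + 1"
  shows "(2 * \<alpha>\<^sup>2 + \<alpha> + 1) / (\<alpha>\<^sup>2 + 3) ^ 3
    = (1/2883) * root 3 (93/2) * (root 3 (8649 + 457 * sqrt 93) + root 3 (8649 - 457 * sqrt 93))"
proof -
  define u where "u = root 3 (93/2 * (8649 + 457 * sqrt 93))"
  define v where "v = root 3 (93/2 * (8649 - 457 * sqrt 93))"
  have uv_def: "root 3 (93/2) * (root 3 (8649 + 457 * sqrt 93) + root 3 (8649 - 457 * sqrt 93)) = u + v"
    unfolding u_def v_def real_root_mult by (rule distrib_left)
  have "u * v = root 3 ((93/2 * (8649 + 457 * sqrt 93)) * (93/2 * (8649 - 457 * sqrt 93)))"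
    unfolding u_def v_def by (rule real_root_mult[symmetric])
  also have "\<dots> = root 3 (4929 ^ 3)"
    by (simp add: algebra_simps power2_eq_square[symmetric] power_mult_distrib power_divide)
  also have "\<dots> = 4929" by (rule real_root_power_cancel) auto
  finally have uv: "u * v = 4929" .
  have "(u + v) ^ 3 = 3 * (u * v) * (u + v) + (u ^ 3 + v ^ 3)" by algebra
  also have "u ^ 3 + v ^ 3 = 804357" unfolding u_def v_def by (simp add: odd_real_root_pow field_simps)
  finally have "(u + v) ^ 3 = 14787 * (u + v) + 804357" unfolding uv by simp
  then have cardano: "((u + v) / 2883) ^ 3 = 53 / 29791 * ((u + v) / 2883) + 1 / 29791"
    by (simp add: power_divide field_simps)
  define x where "x = (2 * \<alpha>\<^sup>2 + \<alpha> + 1) / (\<alpha>\<^sup>2 + 3) ^ 3"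
  have D: "\<alpha>\<^sup>2 + 3 > 0" by (simp add: add_nonneg_pos)
  have "(x ^ 3 - 53 / 29791 * x - 1 / 29791) * (29791 * (\<alpha>\<^sup>2 + 3) ^ 9)
      = 29791 * (2 * \<alpha>\<^sup>2 + \<alpha> + 1) ^ 3 - 53 * (2 * \<alpha>\<^sup>2 + \<alpha> + 1) * (\<alpha>\<^sup>2 + 3) ^ 6 - (\<alpha>\<^sup>2 + 3) ^ 9"
    unfolding x_def using D by (simp add: field_simps power_divide)
  also have "\<dots> = 0" using \<alpha> by algebra
  finally have "x ^ 3 = 53 / 29791 * x + 1 / 29791" using D by simp
  then have "x = (u + v) / 2883" using cardano by (rule depressed_cubic_root_unique) (simp add: power_divide)
  then show ?thesis unfolding x_def using uv_def by (simp add: mult.assoc)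
qed

theorem mainTheorem2:
  shows "((\<lambda>n. ES n / real n) \<longlonglongrightarrow>
           (1/3) * (1 - root 3 ((31 + 3 * sqrt 93) / 1922) - root 3 ((31 - 3 * sqrt 93) / 1922)))
     \<and> ((\<lambda>n. VS n / real n) \<longlonglongrightarrow>
           (1/2883) * root 3 (93/2) * (root 3 (8649 + 457 * sqrt 93) + root 3 (8649 - 457 * sqrt 93)))"
proof -
  obtain \<alpha> :: real where \<alpha>: "\<alpha> ^ 3 = \<alpha>\<^sup>2 + 1" "1 < \<alpha>" using supergolden_exists by blast
  show ?thesis
    using persolus_mean_variance_asymp[OF \<alpha>]
    unfolding supergolden_mean_closed_form[OF \<alpha>(1)] supergolden_variance_closed_form[OF \<alpha>(1)]
    by blast
qed

end
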